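(* Let $T=((\Omega,\mathcal{A}),\{(\Omega,\mathcal{M}_i)\}_{i\in N},\{t_i\}_{i\in N})$ be a type space, $I\subseteq N$, and $S\subseteq\Omega$ an $I$-common certainty component. Let $\mathcal{A}^S=\{F\cap S:F\in\mathcal{A}\}$, $\mathcal{M}_i^S=\{F\cap S:F\in\mathcal{M}_i\}$ for $i\in I$, and for $\omega\in S$, $i\in I$ let $t_i^S(\omega,\cdot)$ be the restriction of $t_i(\omega,\cdot)$ to $(S,\mathcal{A}^S)$, i.e. $t_i^S(\omega,F\cap S)=t_i(\omega,F)$ for $F\in\mathcal{A}$. Then $t_i^S$ is well defined and $((S,\mathcal{A}^S),\{(S,\mathcal{M}_i^S)\}_{i\in I},\{t_i^S\}_{i\in I})$ is a type space.
   Context: A field on a set $X$ is a collection of subsets of $X$ containing $X$ and closed under complements and finite intersections. For a field $\mathcal{A}$ on $\Omega$, $\mathrm{pba}(\Omega,\mathcal{A})$ is the set of finitely additive nonnegative $P:\mathcal{A}\to\mathbb{R}$ with $P(\Omega)=1$; $B(\Omega,\mathcal{A})$ the sup-norm closure of the linear span of indicators of sets in $\mathcal{A}$. A type space is $((\Omega,\mathcal{A}),\{(\Omega,\mathcal{M}_i)\}_{i\in N},\{t_i\}_{i\in N})$ with $N$ a nonempty set of players, fields $\mathcal{M}_i\subseteq\mathcal{A}$ on a set $\Omega$, and $t_i:\Omega\times\mathcal{A}\to[0,1]$ with: $t_i(\omega,\cdot)\in\mathrm{pba}(\Omega,\mathcal{A})$ for all $\omega$; $t_i(\cdot,E)\in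 B(\Omega,\mathcal{M}_i)$ for all $E\in\mathcal{A}$; $t_i(\omega,E)=1$ whenever $E\in\mathcal{M}_i$, $\omega\in E$. For $I\subseteq N$, a nonempty $S\subseteq\Omega$ (not necessarily in $\mathcal{A}$) is an $I$-common certainty component if there exists $E\in\mathcal{A}$ with $E\subseteq S$ and $t_i(\omega,E)=1$ for all $\omega\in S$, $i\in I$. *)

theory Defs
  imports Main "HOL-Library.Indicator_Function"
begin

definition field_on :: "'w set \<Rightarrow> 'w set set \<Rightarrow> bool" where
  "field_on X F \<longleftrightarrow> F \<subseteq> Pow X \<and> X \<in> F \<and> (\<forall>E\<in>F. X - E \<in> F)
     \<and> (\<forall>E\<in>F. \<forall>G\<in>F. E \<inter> G \<in> F)"

definition pba :: "'w set \<Rightarrow> 'w set set \<Rightarrow> ('w set \<Rightarrow> real) \<Rightarrow> bool" where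
  "pba X F P \<longleftrightarrow> (\<forall>E\<in>F. 0 \<le> P E) \<and> P X = 1
     \<and> (\<forall>E\<in>F. \<forall>G\<in>F. E \<inter> G = {} \<longrightarrow> P (E \<union> G) = P E + P G)"

definition simple_span :: "'w set set \<Rightarrow> ('w \<Rightarrow> real) set" where
  "simple_span F = {g. \<exists>n (c::nat \<Rightarrow> real) E. (\<forall>k<n. E k \<in> F)
       \<and> g = (\<lambda>w. \<Sum>k<n. c k * indicator (E k) w)}"

definition Bspace :: "'w set \<Rightarrow> 'w set set \<Rightarrow> ('w \<Rightarrow> real) \<Rightarrow> bool" where
  "Bspace X F f \<longleftrightarrow> (\<forall>\<epsilon>>0. \<exists>g\<in>simple_span F. \<forall>w\<in>X. \<bar>f w - g w\<bar> < \<epsilon>)"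

definition type_space :: "'w set \<Rightarrow> 'w set set \<Rightarrow> 'i set \<Rightarrow> ('i \<Rightarrow> 'w set set)
    \<Rightarrow> ('i \<Rightarrow> 'w \<Rightarrow> 'w set \<Rightarrow> real) \<Rightarrow> bool" where
  "type_space Om A N M t \<longleftrightarrow> N \<noteq> {} \<and> field_on Om A
     \<and> (\<forall>i\<in>N. field_on Om (M i) \<and> M i \<subseteq> A)
     \<and> (\<forall>i\<in>N. \<forall>w\<in>Om. pba Om A (t i w))
     \<and> (\<forall>i\<in>N. \<forall>E\<in>A. Bspace Om (M i) (\<lambda>w. t i w E))
     \<and> (\<forall>i\<in>N. \<forall>E\<in>M i. \<forall>w\<in>E. t i w E = 1)"

definition common_certainty_component :: "'w set \<Rightarrow> 'w set set
    \<Rightarrow> ('i \<Rightarrow> 'w \<Rightarrow> 'w set \<Rightarrow> real) \<Rightarrow> 'i set \<Rightarrow> 'w set \<Rightarrow> bool" where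
  "common_certainty_component Om A t I S \<longleftrightarrow> S \<noteq> {} \<and> S \<subseteq> Om
     \<and> (\<exists>E\<in>A. E \<subseteq> S \<and> (\<forall>w\<in>S. \<forall>i\<in>I. t i w E = 1))"

definition trace_on :: "'w set set \<Rightarrow> 'w set \<Rightarrow> 'w set set" where
  "trace_on F S = {G \<inter> S | G. G \<in> F}"

definition restr_kernel :: "'w set set \<Rightarrow> 'w set \<Rightarrow> ('i \<Rightarrow> 'w \<Rightarrow> 'w set \<Rightarrow> real)
    \<Rightarrow> 'i \<Rightarrow> 'w \<Rightarrow> 'w set \<Rightarrow> real" where
  "restr_kernel A S t i w E = t i w (SOME F. F \<in> A \<and> E = F \<inter> S)"

end

theory Submission
  imports Defs
begin

text \<open>For \<open>\<omega> \<in> S\<close> the event \<open>E \<subseteq> S\<close> witnessing common certainty has full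
  \<open>t\<^sub>i(\<omega>,\<cdot>)\<close>-mass, so its complement is null and \<open>t\<^sub>i(\<omega>,F) = t\<^sub>i(\<omega>,F \<inter> E)\<close>
  depends only on \<open>F \<inter> S\<close>. Hence the restricted kernels are well defined, and
  the type-space axioms pass to traces: additivity by disjointifying representatives
  inside \<open>\<A>\<close>, measurability by tracing the indicator sets of uniform approximants.\<close>

lemma field_onD:
  assumes "field_on X F"
  shows field_on_subset_Pow: "F \<subseteq> Pow X"
    and field_on_top: "X \<in> F"
    and field_on_Diff_top: "G \<in> F \<Longrightarrow> X - G \<in> F"
    and field_on_Int: "G \<in> F \<Longrightarrow> H \<in> F \<Longrightarrow> G \<inter> H \<in> F"
  using assms by (auto simp: field_on_def)

lemma field_on_Diff:
  assumes "field_on X F" "G \<in> F" "H \<in> F"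
  shows "G - H \<in> F"
proof -
  have "G - H = G \<inter> (X - H)" using field_on_subset_Pow[OF assms(1)] assms(2) by blast
  then show ?thesis using assms by (simp add: field_on_Diff_top field_on_Int)
qed

lemma field_on_Un:
  assumes "field_on X F" "G \<in> F" "H \<in> F"
  shows "G \<union> H \<in> F"
proof -
  have "G \<union> H = X - ((X - G) \<inter> (X - H))"
    using field_on_subset_Pow[OF assms(1)] assms(2,3) by blast
  then show ?thesis using assms by (simp add: field_on_Diff_top field_on_Int)
qed

lemma field_on_trace_on:
  assumes "field_on X F" "S \<subseteq> X"
  shows "field_on S (trace_on F S)"
  unfolding field_on_def
proof (intro conjI ballI)
  show "trace_on F S \<subseteq> Pow S" by (auto simp: trace_on_def)
  show "S \<in> trace_on F S"
    using assms field_on_top[OF assms(1)] unfolding trace_on_def by blast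
next
  fix G assume "G \<in> trace_on F S"
  then obtain G' where "G' \<in> F" "G = G' \<inter> S" by (auto simp: trace_on_def)
  moreover have "S - G' \<inter> S = (X - G') \<inter> S" using assms(2) by blast
  ultimately show "S - G \<in> trace_on F S"
    using field_on_Diff_top[OF assms(1)] unfolding trace_on_def by blast
next
  fix G H assume "G \<in> trace_on F S" "H \<in> trace_on F S"
  then obtain G' H' where "G' \<in> F" "G = G' \<inter> S" "H' \<in> F" "H = H' \<inter> S"
    by (auto simp: trace_on_def)
  moreover have "G' \<inter> S \<inter> (H' \<inter> S) = (G' \<inter> H') \<inter> S" by blast
  ultimately show "G \<inter> H \<in> trace_on F S"
    using field_on_Int[OF assms(1)] unfolding trace_on_def by blast
qed

lemma trace_on_mono: "F \<subseteq> G \<Longrightarrow> trace_on F S \<subseteq> trace_on G S"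
  by (auto simp: trace_on_def)

lemma pba_nonneg: "pba X F P \<Longrightarrow> G \<in> F \<Longrightarrow> 0 \<le> P G"
  by (simp add: pba_def)

lemma pba_top: "pba X F P \<Longrightarrow> P X = 1"
  by (simp add: pba_def)

lemma pba_additive:
  "pba X F P \<Longrightarrow> G \<in> F \<Longrightarrow> H \<in> F \<Longrightarrow> G \<inter> H = {} \<Longrightarrow> P (G \<union> H) = P G + P H"
  by (simp add: pba_def)

lemma pba_split:
  assumes "pba X F P" "field_on X F" "G \<in> F" "H \<in> F"
  shows "P G = P (G \<inter> H) + P (G - H)"
proof -
  have "P ((G \<inter> H) \<union> (G - H)) = P (G \<inter> H) + P (G - H)"
    using assms(3,4) field_on_Int[OF assms(2)] field_on_Diff[OF assms(2)]
    by (intro pba_additive[OF assms(1)]) auto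
  moreover have "(G \<inter> H) \<union> (G - H) = G" by blast
  ultimately show ?thesis by simp
qed

lemma pba_mono:
  assumes "pba X F P" "field_on X F" "G \<in> F" "H \<in> F" "G \<subseteq> H"
  shows "P G \<le> P H"
proof -
  have "P H = P G + P (H - G)"
    using pba_split[OF assms(1,2,4,3)] assms(5) by (simp add: Int_absorb1)
  moreover have "0 \<le> P (H - G)"
    using assms(3,4) by (intro pba_nonneg[OF assms(1)] field_on_Diff[OF assms(2)])
  ultimately show ?thesis by simp
qed

lemma pba_eq_Int_if_certain:
  assumes "pba X F P" "field_on X F" "G \<in> F" "E \<in> F" "P E = 1"
  shows "P G = P (G \<inter> E)"
proof -
  have "X \<inter> E = E" using field_on_subset_Pow[OF assms(2)] assms(4) by blast
  then have "P (X - E) = 0"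
    using pba_split[OF assms(1,2) field_on_top[OF assms(2)] assms(4)] assms(5)
      pba_top[OF assms(1)] by simp
  moreover have "P (G - E) \<le> P (X - E)"
    using field_on_subset_Pow[OF assms(2)] assms(3,4)
    by (intro pba_mono[OF assms(1,2)] field_on_Diff[OF assms(2)] field_on_top[OF assms(2)]) auto
  moreover have "0 \<le> P (G - E)"
    using assms(3,4) by (intro pba_nonneg[OF assms(1)] field_on_Diff[OF assms(2)])
  ultimately have "P (G - E) = 0" by linarith
  then show ?thesis using pba_split[OF assms(1,2,3,4)] by simp
qed

lemma pba_eq_if_trace_eq:
  assumes "pba X F P" "field_on X F" "E \<in> F" "E \<subseteq> S" "P E = 1"
    and "G \<in> F" "H \<in> F" "G \<inter> S = H \<inter> S"
  shows "P G = P H"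
proof -
  have "G \<inter> E = H \<inter> E" using assms(4,8) by blast
  then show ?thesis using pba_eq_Int_if_certain assms by metis
qed

lemma pba_trace_on:
  assumes "pba X F P" "field_on X F" "S \<subseteq> X"
    and Q: "\<And>G. G \<in> F \<Longrightarrow> Q (G \<inter> S) = P G"
  shows "pba S (trace_on F S) Q"
  unfolding pba_def
proof (intro conjI ballI impI)
  fix G assume "G \<in> trace_on F S"
  then show "0 \<le> Q G" using Q pba_nonneg[OF assms(1)] by (auto simp: trace_on_def)
next
  show "Q S = 1"
    using Q[OF field_on_top[OF assms(2)]] pba_top[OF assms(1)] assms(3)
    by (simp add: Int_absorb1)
next
  fix G H assume "G \<in> trace_on F S" "H \<in> trace_on F S" and disj: "G \<inter> H = {}"
  then obtain G' H' where G': "G' \<in> F" "G = G' \<inter> S" and H': "H' \<in> F" "H = H' \<inter> S"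
    by (auto simp: trace_on_def)
  \<comment> \<open>\<open>H' - G'\<close> has the same trace as \<open>H'\<close> but is disjoint from \<open>G'\<close> in \<open>X\<close>.\<close>
  have HG: "H' - G' \<in> F" "G' \<union> (H' - G') \<in> F"
    using G' H' assms(2) by (auto intro: field_on_Diff field_on_Un)
  have "(H' - G') \<inter> S = H" "(G' \<union> (H' - G')) \<inter> S = G \<union> H"
    using G' H' disj by auto
  then show "Q (G \<union> H) = Q G + Q H"
    using Q[OF HG(1)] Q[OF HG(2)] Q[OF G'(1)] G'(2)
      pba_additive[OF assms(1) G'(1) HG(1)] by auto
qed

lemma simple_span_trace_on:
  assumes "g \<in> simple_span F"
  obtains h where "h \<in> simple_span (trace_on F S)" "\<And>w. w \<in> S \<Longrightarrow> h w = g w"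
proof -
  obtain n :: nat and c E where E: "\<forall>k<n. E k \<in> F"
    and g: "g = (\<lambda>w. \<Sum>k<n. c k * indicator (E k) w)"
    using assms unfolding simple_span_def by blast
  have "\<forall>k<n. E k \<inter> S \<in> trace_on F S" using E by (auto simp: trace_on_def)
  then have "(\<lambda>w. \<Sum>k<n. c k * indicator (E k \<inter> S) w) \<in> simple_span (trace_on F S)"
    unfolding simple_span_def by (intro CollectI exI[of _ n] exI[of _ c] exI[of _ "\<lambda>k. E k \<inter> S"]) simp
  moreover have "(\<Sum>k<n. c k * indicator (E k \<inter> S) w) = g w" if "w \<in> S" for w
    using that by (simp add: g indicator_def)
  ultimately show ?thesis using that by blast
qed

lemma Bspace_trace_on:
  assumes "Bspace X F f" "S \<subseteq> X" "\<And>w. w \<in> S \<Longrightarrow> g w = f w"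
  shows "Bspace S (trace_on F S) g"
  unfolding Bspace_def
proof (intro allI impI)
  fix \<epsilon> :: real assume "\<epsilon> > 0"
  then obtain h where h: "h \<in> simple_span F" "\<forall>w\<in>X. \<bar>f w - h w\<bar> < \<epsilon>"
    using assms(1) unfolding Bspace_def by blast
  obtain h' where "h' \<in> simple_span (trace_on F S)" "\<And>w. w \<in> S \<Longrightarrow> h' w = h w"
    using simple_span_trace_on[OF h(1)] by blast
  then show "\<exists>h\<in>simple_span (trace_on F S). \<forall>w\<in>S. \<bar>g w - h w\<bar> < \<epsilon>"
    using h(2) assms(2,3) by (metis subsetD)
qed

lemma restr_kernel_trace_on:
  assumes "F \<in> A" "\<And>G. G \<in> A \<Longrightarrow> G \<inter> S = F \<inter> S \<Longrightarrow> t i w G = t i w F"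
  shows "restr_kernel A S t i w (F \<inter> S) = t i w F"
proof -
  define G where "G = (SOME G. G \<in> A \<and> F \<inter> S = G \<inter> S)"
  have "G \<in> A \<and> F \<inter> S = G \<inter> S"
    unfolding G_def by (rule someI[of _ F]) (simp add: assms(1))
  then have "t i w G = t i w F" using assms(2) by simp
  then show ?thesis unfolding restr_kernel_def G_def .
qed

lemma type_space_trace_on:
  assumes ts: "type_space Om A N M t" and "I \<subseteq> N" "I \<noteq> {}" "S \<subseteq> Om"
    and restr: "\<And>i w F. i \<in> I \<Longrightarrow> w \<in> S \<Longrightarrow> F \<in> A \<Longrightarrow> t' i w (F \<inter> S) = t i w F"
  shows "type_space S (trace_on A S) I (\<lambda>i. trace_on (M i) S) t'"
proof -
  have T: "field_on Om A" "\<And>i. i \<in> I \<Longrightarrow> field_on Om (M i)" "\<And>i. i \<in> I \<Longrightarrow> M i \<subseteq> A"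
    "\<And>i w. i \<in> I \<Longrightarrow> w \<in> Om \<Longrightarrow> pba Om A (t i w)"
    "\<And>i F. i \<in> I \<Longrightarrow> F \<in> A \<Longrightarrow> Bspace Om (M i) (\<lambda>w. t i w F)"
    "\<And>i F w. i \<in> I \<Longrightarrow> F \<in> M i \<Longrightarrow> w \<in> F \<Longrightarrow> t i w F = 1"
    using ts \<open>I \<subseteq> N\<close> by (auto simp: type_space_def)
  show ?thesis
    unfolding type_space_def
  proof (intro conjI ballI)
    show "I \<noteq> {}" by fact
    show "field_on S (trace_on A S)" using T(1) \<open>S \<subseteq> Om\<close> by (rule field_on_trace_on)
  next
    fix i assume "i \<in> I"
    show "field_on S (trace_on (M i) S)"
      using T(2)[OF \<open>i \<in> I\<close>] \<open>S \<subseteq> Om\<close> by (rule field_on_trace_on)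
  next
    fix i assume "i \<in> I"
    show "trace_on (M i) S \<subseteq> trace_on A S"
      using T(3)[OF \<open>i \<in> I\<close>] by (rule trace_on_mono)
  next
    fix i w assume "i \<in> I" "w \<in> S"
    then show "pba S (trace_on A S) (t' i w)"
      using T(1) \<open>S \<subseteq> Om\<close> restr by (intro pba_trace_on[OF T(4)]) auto
  next
    fix i F assume "i \<in> I" "F \<in> trace_on A S"
    then obtain G where "G \<in> A" "F = G \<inter> S" by (auto simp: trace_on_def)
    then show "Bspace S (trace_on (M i) S) (\<lambda>w. t' i w F)"
      using \<open>S \<subseteq> Om\<close> restr[OF \<open>i \<in> I\<close> _ \<open>G \<in> A\<close>]
      by (intro Bspace_trace_on[OF T(5)[OF \<open>i \<in> I\<close> \<open>G \<in> A\<close>]]) auto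
  next
    fix i F w assume "i \<in> I" "F \<in> trace_on (M i) S" "w \<in> F"
    then obtain G where "G \<in> M i" "F = G \<inter> S" by (auto simp: trace_on_def)
    then show "t' i w F = 1"
      using \<open>i \<in> I\<close> \<open>w \<in> F\<close> T(3)[of i] T(6)[of i G w] restr[of i w G] by auto
  qed
qed

theorem proposition2:
  fixes Om :: "'w set" and A :: "'w set set" and N I :: "'i set"
    and M :: "'i \<Rightarrow> 'w set set" and t :: "'i \<Rightarrow> 'w \<Rightarrow> 'w set \<Rightarrow> real" and S :: "'w set"
  assumes "type_space Om A N M t"
    and "I \<subseteq> N" and "I \<noteq> {}"
    and "common_certainty_component Om A t I S"
  shows "(\<forall>i\<in>I. \<forall>w\<in>S. \<forall>F\<in>A. \<forall>G\<in>A. F \<inter> S = G \<inter> S \<longrightarrow> t i w F = t i w G)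
    \<and> type_space S (trace_on A S) I (\<lambda>i. trace_on (M i) S) (restr_kernel A S t)"
proof -
  obtain E where "S \<subseteq> Om" "E \<in> A" "E \<subseteq> S" "\<And>w i. w \<in> S \<Longrightarrow> i \<in> I \<Longrightarrow> t i w E = 1"
    using assms(4) unfolding common_certainty_component_def by blast
  moreover have "field_on Om A" "\<And>i w. i \<in> I \<Longrightarrow> w \<in> Om \<Longrightarrow> pba Om A (t i w)"
    using assms(1,2) by (auto simp: type_space_def)
  ultimately have well_defined:
    "\<forall>i\<in>I. \<forall>w\<in>S. \<forall>F\<in>A. \<forall>G\<in>A. F \<inter> S = G \<inter> S \<longrightarrow> t i w F = t i w G"
    by (blast intro: pba_eq_if_trace_eq)
  have "restr_kernel A S t i w (F \<inter> S) = t i w F" if "i \<in> I" "w \<in> S" "F \<in> A" for i w F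
    using that(3)
  proof (rule restr_kernel_trace_on)
    show "t i w G = t i w F" if "G \<in> A" "G \<inter> S = F \<inter> S" for G
      using well_defined \<open>i \<in> I\<close> \<open>w \<in> S\<close> \<open>F \<in> A\<close> that by metis
  qed
  then have "type_space S (trace_on A S) I (\<lambda>i. trace_on (M i) S) (restr_kernel A S t)"
    by (rule type_space_trace_on[OF assms(1-3) \<open>S \<subseteq> Om\<close>])
  with well_defined show ?thesis by blast
qed

end
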